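(* Let $(\mathbf{X},\mathbf{p})$ be a $\{1,k\}$-payment equilibrium and let $z<k$ be an integer such that: agents in $N_L$ are $(2-1/k)$-EFX towards each other; $p(X_j)\in[z,k+z]$ for all $j\in N_L$; and $p(X_i)\in[k,k+z]$ for all $i\in N_H$. If some agent $i$ is not $(2-1/k)$-EFX towards another agent $j$, then $i\in N_H$, $j\in N_L$, $\alpha_i=1$, and $X_j\subseteq\mathsf{MPB}_i$.
   Context: Fix $k>1$. Agents $N$, chores $M$, additive costs $c_i(e)\in\{1,k\}$; as a standing assumption every agent $i$ has at least one item $e$ with $c_i(e)=1$. An allocation $\mathbf{X}$ partitions $M$ into bundles $X_i$. A payment vector assigns $p(e)>0$, $p(X)=\sum_{e\in X}p(e)$; $\alpha_{i,e}=c_i(e)/p(e)$, $\alpha_i=\min_{e\in M}\alpha_{i,e}$, $\mathsf{MPB}_i=\{e:\alpha_{i,e}=\alpha_i\}$; $(\mathbf{X},\mathbf{p})$ is a $\{1,k\}$-payment equilibrium if $X_i\subseteq\mathsf{MPB}_i$ for all $i$ and $p(e)\in\{1,k\}$ for all $e$. $L=\{e:p(e)=1\}$, $H=\{e:p(e)=k\}$, $N_L=\{i:X_i\subseteq L\}$, $N_H=\{i:|X_i\cap H|\ge1\}$. Agent $i$ is $\beta$-EFX towards $j$ if $X_i=\emptyset$ or $c_i(X_i\setminus\{e\})\le\beta\,c_i(X_j)$ for all $e\in X_i$. *)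

theory Defs
  imports Main "HOL-Library.Extended_Real"
begin

definition cost :: "('a \<Rightarrow> 'b \<Rightarrow> real) \<Rightarrow> 'a \<Rightarrow> 'b set \<Rightarrow> real" where
  "cost c i S = (\<Sum>e\<in>S. c i e)"

definition pay :: "('b \<Rightarrow> real) \<Rightarrow> 'b set \<Rightarrow> real" where
  "pay p S = (\<Sum>e\<in>S. p e)"

definition mpb_ratio :: "('b \<Rightarrow> real) \<Rightarrow> ('a \<Rightarrow> 'b \<Rightarrow> real) \<Rightarrow> 'b set \<Rightarrow> 'a \<Rightarrow> real" where
  "mpb_ratio p c M i = Min ((\<lambda>e. c i e / p e) ` M)"

definition MPB :: "('b \<Rightarrow> real) \<Rightarrow> ('a \<Rightarrow> 'b \<Rightarrow> real) \<Rightarrow> 'b set \<Rightarrow> 'a \<Rightarrow> 'b set" where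
  "MPB p c M i = {e \<in> M. c i e / p e = mpb_ratio p c M i}"

definition instance_ok :: "real \<Rightarrow> 'a set \<Rightarrow> 'b set \<Rightarrow> ('a \<Rightarrow> 'b \<Rightarrow> real) \<Rightarrow> bool" where
  "instance_ok k N M c \<longleftrightarrow> finite N \<and> finite M \<and> k > 1 \<and>
     (\<forall>i\<in>N. \<forall>e\<in>M. c i e \<in> {1, k}) \<and> (\<forall>i\<in>N. \<exists>e\<in>M. c i e = 1)"

definition allocation :: "'a set \<Rightarrow> 'b set \<Rightarrow> ('a \<Rightarrow> 'b set) \<Rightarrow> bool" where
  "allocation N M X \<longleftrightarrow> (\<Union>i\<in>N. X i) = M \<and>
     (\<forall>i\<in>N. \<forall>j\<in>N. i \<noteq> j \<longrightarrow> X i \<inter> X j = {})"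

definition payment_eq_1k :: "real \<Rightarrow> 'a set \<Rightarrow> 'b set \<Rightarrow> ('a \<Rightarrow> 'b \<Rightarrow> real)
    \<Rightarrow> ('a \<Rightarrow> 'b set) \<Rightarrow> ('b \<Rightarrow> real) \<Rightarrow> bool" where
  "payment_eq_1k k N M c X p \<longleftrightarrow> allocation N M X \<and>
     (\<forall>e\<in>M. p e \<in> {1, k}) \<and> (\<forall>i\<in>N. X i \<subseteq> MPB p c M i)"

definition Lset :: "'b set \<Rightarrow> ('b \<Rightarrow> real) \<Rightarrow> 'b set" where
  "Lset M p = {e \<in> M. p e = 1}"

definition Hset :: "real \<Rightarrow> 'b set \<Rightarrow> ('b \<Rightarrow> real) \<Rightarrow> 'b set" where
  "Hset k M p = {e \<in> M. p e = k}"

definition NL :: "'a set \<Rightarrow> 'b set \<Rightarrow> ('a \<Rightarrow> 'b set) \<Rightarrow> ('b \<Rightarrow> real) \<Rightarrow> 'a set" where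
  "NL N M X p = {i \<in> N. X i \<subseteq> Lset M p}"

definition NH :: "real \<Rightarrow> 'a set \<Rightarrow> 'b set \<Rightarrow> ('a \<Rightarrow> 'b set) \<Rightarrow> ('b \<Rightarrow> real) \<Rightarrow> 'a set" where
  "NH k N M X p = {i \<in> N. card (X i \<inter> Hset k M p) \<ge> 1}"

definition beta_EFX :: "real \<Rightarrow> ('a \<Rightarrow> 'b \<Rightarrow> real) \<Rightarrow> ('a \<Rightarrow> 'b set) \<Rightarrow> 'a \<Rightarrow> 'a \<Rightarrow> bool" where
  "beta_EFX \<beta> c X i j \<longleftrightarrow> X i = {} \<or>
     (\<forall>e\<in>X i. cost c i (X i - {e}) \<le> \<beta> * cost c i (X j))"

end

theory Submission
  imports Defs
begin

text \<open>Write \<open>\<alpha>\<^sub>i\<close> for the MPB ratio of agent \<open>i\<close> and \<open>\<beta> = 2 - 1/k\<close>. Since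
  \<open>X\<^sub>i \<subseteq> MPB\<^sub>i\<close> and every price is at least 1, agent \<open>i\<close> has
  \<open>c\<^sub>i(X\<^sub>i - e) \<le> \<alpha>\<^sub>i (p(X\<^sub>i) - 1)\<close>, while \<open>c\<^sub>i(X\<^sub>j) \<ge> \<alpha>\<^sub>i p(X\<^sub>j)\<close> for every bundle.
  The payment bounds give \<open>p(X\<^sub>i) \<le> k + z < 2k\<close>, so \<open>i\<close> is \<open>\<beta>\<close>-EFX towards \<open>j\<close> as soon
  as \<open>c\<^sub>i(X\<^sub>j) \<ge> \<alpha>\<^sub>i k\<close>, because \<open>\<beta> k = 2k - 1\<close>. This excludes \<open>j \<in> N\<^sub>H\<close> (then
  \<open>p(X\<^sub>j) \<ge> k\<close>) and, once \<open>\<alpha>\<^sub>i = 1\<close>, any chore of cost \<open>k\<close> to \<open>i\<close> in \<open>X\<^sub>j\<close>.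
  Moreover \<open>\<alpha>\<^sub>i \<in> {1, 1/k}\<close>, and \<open>\<alpha>\<^sub>i = 1/k\<close> forces all chores of \<open>X\<^sub>i\<close> to have
  price \<open>k\<close>, hence \<open>|X\<^sub>i| \<le> 1\<close>, and then EFX is trivial.\<close>

lemma mpb_ratio_le:
  assumes "finite M" "e \<in> M"
  shows "mpb_ratio p c M i \<le> c i e / p e"
  unfolding mpb_ratio_def using assms by (intro Min_le) auto

lemma mpb_ratio_attained:
  assumes "finite M" "M \<noteq> {}"
  obtains e where "e \<in> M" "mpb_ratio p c M i = c i e / p e"
proof -
  have "mpb_ratio p c M i \<in> (\<lambda>e. c i e / p e) ` M"
    unfolding mpb_ratio_def using assms by (intro Min_in) auto
  then show thesis using that by blast
qed

lemma mpb_ratio_mult_pay_le_cost: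
  assumes "finite M" "S \<subseteq> M" "\<And>e. e \<in> S \<Longrightarrow> p e > 0"
  shows "mpb_ratio p c M i * pay p S \<le> cost c i S"
  unfolding pay_def cost_def sum_distrib_left
proof (rule sum_mono)
  fix e assume "e \<in> S"
  with assms mpb_ratio_le[of M e p c i] show "mpb_ratio p c M i * p e \<le> c i e"
    by (auto simp: le_divide_eq)
qed

lemma cost_eq_mpb_ratio_mult_pay:
  assumes "S \<subseteq> MPB p c M i" "\<And>e. e \<in> S \<Longrightarrow> p e \<noteq> 0"
  shows "cost c i S = mpb_ratio p c M i * pay p S"
  unfolding pay_def cost_def sum_distrib_left
  using assms by (intro sum.cong) (auto simp: MPB_def divide_eq_eq)

locale payment_equilibrium_1k =
  fixes k :: real and N :: "'a set" and M :: "'b set"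
    and c :: "'a \<Rightarrow> 'b \<Rightarrow> real" and X :: "'a \<Rightarrow> 'b set" and p :: "'b \<Rightarrow> real"
  assumes valid_instance: "instance_ok k N M c"
    and equilibrium: "payment_eq_1k k N M c X p"
begin

abbreviation \<alpha> :: "'a \<Rightarrow> real" where
  "\<alpha> i \<equiv> mpb_ratio p c M i"

lemma finite_M: "finite M"
  and k_gt_1: "k > 1"
  and cost_values: "i \<in> N \<Longrightarrow> e \<in> M \<Longrightarrow> c i e \<in> {1, k}"
  and cheap_chore_exists: "i \<in> N \<Longrightarrow> \<exists>e\<in>M. c i e = 1"
  and price_values: "e \<in> M \<Longrightarrow> p e \<in> {1, k}"
  and bundle_subset_MPB: "i \<in> N \<Longrightarrow> X i \<subseteq> MPB p c M i"
  and bundle_subset_M: "i \<in> N \<Longrightarrow> X i \<subseteq> M"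
  using valid_instance equilibrium
  unfolding instance_ok_def payment_eq_1k_def allocation_def by auto

lemma finite_bundle: "i \<in> N \<Longrightarrow> finite (X i)"
  using bundle_subset_M finite_M finite_subset by blast

lemma price_ge_1: "e \<in> M \<Longrightarrow> p e \<ge> 1"
  using price_values[of e] k_gt_1 by auto

lemma cost_nonneg: "i \<in> N \<Longrightarrow> e \<in> M \<Longrightarrow> c i e \<ge> 0"
  using cost_values[of i e] k_gt_1 by auto

lemma mpb_ratio_eq_1_or_inv_k:
  assumes "i \<in> N"
  shows "\<alpha> i = 1 \<or> \<alpha> i = 1 / k"
proof -
  obtain e1 where e1: "e1 \<in> M" "c i e1 = 1"
    using cheap_chore_exists[OF assms] by blast
  then have "M \<noteq> {}" by blast
  then obtain e where e: "e \<in> M" "\<alpha> i = c i e / p e"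
    by (rule mpb_ratio_attained[OF finite_M])
  have "c i e1 / p e1 \<le> 1"
    using e1(2) price_ge_1[OF e1(1)] by simp
  then have "\<alpha> i \<le> 1"
    using mpb_ratio_le[OF finite_M e1(1), of p c i] by linarith
  have price: "p e = 1 \<or> p e = k"
    using price_values[OF e(1)] by simp
  show ?thesis
  proof (cases "c i e = 1")
    case True
    then show ?thesis using e(2) price by auto
  next
    case False
    then have "c i e = k"
      using cost_values[OF assms e(1)] by simp
    moreover have "p e \<noteq> 1"
      using \<open>\<alpha> i \<le> 1\<close> e(2) k_gt_1 \<open>c i e = k\<close> by auto
    ultimately show ?thesis
      using e(2) price k_gt_1 by simp
  qed
qed

lemma mpb_ratio_pos:
  assumes "i \<in> N"
  shows "\<alpha> i > 0"
  using mpb_ratio_eq_1_or_inv_k[OF assms] k_gt_1 by auto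

lemma cost_bundle_minus_le:
  assumes "i \<in> N" "e \<in> X i"
  shows "cost c i (X i - {e}) \<le> \<alpha> i * (pay p (X i) - 1)"
proof -
  have "e \<in> M" using assms bundle_subset_M by blast
  have "X i - {e} \<subseteq> MPB p c M i"
    using bundle_subset_MPB[OF assms(1)] by blast
  moreover have "p x \<noteq> 0" if "x \<in> X i - {e}" for x
    using that bundle_subset_M[OF assms(1)] price_ge_1 by force
  ultimately have "cost c i (X i - {e}) = \<alpha> i * pay p (X i - {e})"
    by (rule cost_eq_mpb_ratio_mult_pay)
  also have "\<dots> = \<alpha> i * (pay p (X i) - p e)"
    unfolding pay_def using finite_bundle[OF assms(1)] assms(2) by (simp add: sum_diff1)
  also have "\<dots> \<le> \<alpha> i * (pay p (X i) - 1)"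
    using mpb_ratio_pos[OF assms(1)] price_ge_1[OF \<open>e \<in> M\<close>] by simp
  finally show ?thesis .
qed

lemma chore_cost_le_cost_bundle:
  assumes "i \<in> N" "j \<in> N" "e \<in> X j"
  shows "c i e \<le> cost c i (X j)"
  unfolding cost_def
proof (rule member_le_sum[OF assms(3) _ finite_bundle[OF assms(2)]])
  fix x assume "x \<in> X j - {e}"
  then show "0 \<le> c i x"
    using cost_nonneg[OF assms(1)] bundle_subset_M[OF assms(2)] by blast
qed

lemma mpb_ratio_mult_pay_le_cost_bundle:
  assumes "j \<in> N"
  shows "\<alpha> i * pay p (X j) \<le> cost c i (X j)"
proof (rule mpb_ratio_mult_pay_le_cost[OF finite_M bundle_subset_M[OF assms]])
  fix e assume "e \<in> X j"
  then have "p e \<ge> 1"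
    using price_ge_1 bundle_subset_M[OF assms] by blast
  then show "p e > 0" by linarith
qed

lemma two_minus_inv_k_ge_1: "2 - 1 / k \<ge> 1"
  using k_gt_1 by simp

lemma beta_EFX_if_cost_ge_mpb_ratio_mult_k:
  assumes "i \<in> N" "pay p (X i) \<le> 2 * k" "\<alpha> i * k \<le> cost c i (X j)"
  shows "beta_EFX (2 - 1/k) c X i j"
  unfolding beta_EFX_def
proof (intro disjI2 ballI)
  fix e assume "e \<in> X i"
  have "cost c i (X i - {e}) \<le> \<alpha> i * (pay p (X i) - 1)"
    using cost_bundle_minus_le[OF assms(1) \<open>e \<in> X i\<close>] .
  also have "\<dots> \<le> \<alpha> i * (2 * k - 1)"
    using assms(2) mpb_ratio_pos[OF assms(1)] by (intro mult_left_mono) simp_all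
  also have "\<dots> = (2 - 1/k) * (\<alpha> i * k)"
    using k_gt_1 by (simp add: algebra_simps)
  also have "\<dots> \<le> (2 - 1/k) * cost c i (X j)"
    using assms(3) two_minus_inv_k_ge_1 by (intro mult_left_mono) simp_all
  finally show "cost c i (X i - {e}) \<le> (2 - 1/k) * cost c i (X j)" .
qed

lemma price_eq_k_if_mpb_ratio_inv_k:
  assumes "i \<in> N" "\<alpha> i = 1 / k" "e \<in> MPB p c M i"
  shows "p e = k"
proof -
  have e: "e \<in> M" "c i e / p e = 1 / k"
    using assms unfolding MPB_def by auto
  then have "c i e * k = p e"
    using price_ge_1[OF e(1)] k_gt_1 by (simp add: divide_eq_eq)
  moreover have "k * k \<noteq> 1" "k * k \<noteq> k"
    using k_gt_1 by (metis less_1_mult less_irrefl, simp)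
  ultimately show ?thesis
    using cost_values[OF assms(1) e(1)] price_values[OF e(1)] by auto
qed

lemma beta_EFX_if_mpb_ratio_inv_k:
  assumes "i \<in> N" "j \<in> N" "\<beta> \<ge> 0" "\<alpha> i = 1 / k" "pay p (X i) < 2 * k"
  shows "beta_EFX \<beta> c X i j"
proof -
  have "pay p (X i) = (\<Sum>e\<in>X i. k)"
    unfolding pay_def using assms(1,4) bundle_subset_MPB price_eq_k_if_mpb_ratio_inv_k
    by (intro sum.cong) blast+
  then have "pay p (X i) = card (X i) * k"
    by simp
  then have "card (X i) \<le> 1"
    using assms(5) k_gt_1 by (simp add: mult_less_cancel_right2)
  then have "X i - {e} = {}" if "e \<in> X i" for e
    using that card_le_Suc0_iff_eq[OF finite_bundle[OF assms(1)]] by auto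
  then have "cost c i (X i - {e}) = 0" if "e \<in> X i" for e
    using that unfolding cost_def by (metis sum.empty)
  moreover have "cost c i (X j) \<ge> 0"
    unfolding cost_def using assms(1,2) bundle_subset_M cost_nonneg by (intro sum_nonneg) blast
  ultimately show ?thesis
    unfolding beta_EFX_def using assms(3) by simp
qed

lemma pay_ge_k_if_NH:
  assumes "j \<in> NH k N M X p"
  shows "pay p (X j) \<ge> k"
proof -
  have j: "j \<in> N" "X j \<inter> Hset k M p \<noteq> {}"
    using assms unfolding NH_def by auto
  then obtain e where e: "e \<in> X j" "p e = k" unfolding Hset_def by auto
  have "0 \<le> p x" if "x \<in> X j" for x
    using that j(1) bundle_subset_M price_ge_1 by (meson order_trans subsetD zero_le_one)
  then have "p e \<le> pay p (X j)"
    unfolding pay_def using j(1) e(1) by (intro member_le_sum finite_bundle) auto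
  then show ?thesis using e(2) by simp
qed

lemma NL_or_NH:
  assumes "i \<in> N"
  shows "i \<in> NL N M X p \<or> i \<in> NH k N M X p"
proof (cases "X i \<subseteq> Lset M p")
  case True
  then show ?thesis using assms unfolding NL_def by auto
next
  case False
  then have "X i \<inter> Hset k M p \<noteq> {}"
    using assms bundle_subset_M price_values unfolding Lset_def Hset_def by blast
  then have "card (X i \<inter> Hset k M p) \<ge> 1"
    using finite_bundle[OF assms] by (simp add: Suc_le_eq card_gt_0_iff)
  then show ?thesis using assms unfolding NH_def by auto
qed

lemma NL_if_not_beta_EFX:
  assumes "i \<in> N" "j \<in> N" "pay p (X i) \<le> 2 * k" "\<not> beta_EFX (2 - 1/k) c X i j"
  shows "j \<in> NL N M X p"
proof (rule ccontr)
  assume "j \<notin> NL N M X p"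
  then have "k \<le> pay p (X j)"
    using NL_or_NH[OF assms(2)] pay_ge_k_if_NH by blast
  then have "\<alpha> i * k \<le> \<alpha> i * pay p (X j)"
    using mpb_ratio_pos[OF assms(1)] by simp
  also have "\<dots> \<le> cost c i (X j)"
    by (rule mpb_ratio_mult_pay_le_cost_bundle[OF assms(2)])
  finally show False
    using beta_EFX_if_cost_ge_mpb_ratio_mult_k[OF assms(1,3)] assms(4) by blast
qed

lemma mpb_ratio_eq_1_if_not_beta_EFX:
  assumes "i \<in> N" "j \<in> N" "pay p (X i) < 2 * k" "\<not> beta_EFX (2 - 1/k) c X i j"
  shows "\<alpha> i = 1"
proof (rule ccontr)
  assume "\<alpha> i \<noteq> 1"
  then have "\<alpha> i = 1 / k"
    using mpb_ratio_eq_1_or_inv_k[OF assms(1)] by blast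
  moreover have "(0::real) \<le> 2 - 1 / k"
    using two_minus_inv_k_ge_1 by linarith
  ultimately show False
    using beta_EFX_if_mpb_ratio_inv_k[OF assms(1,2)] assms(3,4) by blast
qed

lemma NL_bundle_subset_MPB_if_not_beta_EFX:
  assumes "i \<in> N" "j \<in> NL N M X p" "\<alpha> i = 1" "pay p (X i) \<le> 2 * k"
    and "\<not> beta_EFX (2 - 1/k) c X i j"
  shows "X j \<subseteq> MPB p c M i"
proof
  fix e assume e: "e \<in> X j"
  have "j \<in> N" using assms(2) unfolding NL_def by blast
  have "e \<in> M" "p e = 1"
    using assms(2) e unfolding NL_def Lset_def by auto
  have "c i e \<noteq> k"
  proof
    assume "c i e = k"
    then have "\<alpha> i * k \<le> cost c i (X j)"
      using chore_cost_le_cost_bundle[OF assms(1) \<open>j \<in> N\<close> e] assms(3) by simp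
    then show False
      using beta_EFX_if_cost_ge_mpb_ratio_mult_k[OF assms(1,4)] assms(5) by blast
  qed
  then show "e \<in> MPB p c M i"
    using \<open>e \<in> M\<close> \<open>p e = 1\<close> assms(3) cost_values[OF assms(1)] unfolding MPB_def by auto
qed

end

theorem lemma9:
  fixes k :: real and z :: int
    and N :: "'a set" and M :: "'b set"
    and c :: "'a \<Rightarrow> 'b \<Rightarrow> real" and X :: "'a \<Rightarrow> 'b set" and p :: "'b \<Rightarrow> real"
  assumes inst: "instance_ok k N M c"
    and eq: "payment_eq_1k k N M c X p"
    and zk: "real_of_int z < k"
    and efxL: "\<forall>i\<in>NL N M X p. \<forall>j\<in>NL N M X p. i \<noteq> j \<longrightarrow> beta_EFX (2 - 1/k) c X i j"
    and payL: "\<forall>j\<in>NL N M X p. real_of_int z \<le> pay p (X j) \<and> pay p (X j) \<le> k + real_of_int z"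
    and payH: "\<forall>i\<in>NH k N M X p. k \<le> pay p (X i) \<and> pay p (X i) \<le> k + real_of_int z"
    and ij: "i \<in> N" "j \<in> N" "i \<noteq> j"
    and notefx: "\<not> beta_EFX (2 - 1/k) c X i j"
  shows "i \<in> NH k N M X p \<and> j \<in> NL N M X p \<and> mpb_ratio p c M i = 1 \<and> X j \<subseteq> MPB p c M i"
proof -
  interpret payment_equilibrium_1k k N M c X p using inst eq by unfold_locales
  have "pay p (X i) \<le> k + z"
    using NL_or_NH[OF ij(1)] payL payH by blast
  then have pay_i: "pay p (X i) < 2 * k"
    using zk by linarith
  have j_NL: "j \<in> NL N M X p"
    using NL_if_not_beta_EFX[OF ij(1,2)] pay_i notefx by simp
  moreover have "i \<in> NH k N M X p"
    using NL_or_NH[OF ij(1)] efxL j_NL ij(3) notefx by blast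
  moreover have ratio_1: "\<alpha> i = 1"
    using mpb_ratio_eq_1_if_not_beta_EFX[OF ij(1,2) pay_i notefx] .
  moreover have "X j \<subseteq> MPB p c M i"
    using NL_bundle_subset_MPB_if_not_beta_EFX[OF ij(1) j_NL ratio_1] pay_i notefx by simp
  ultimately show ?thesis by blast
qed

end
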